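(* Let $T=T_\lambda(r,m)$ with $r=m$, $n\ge3$, and suppose $T$ acts linearly and inner faithfully on $\Bbbk\overline{Q}$ by $$g\cdot e_i=e_{i+d},\quad g\cdot a_i=\mu_i a_{i+d},\quad g\cdot a_i^*=\mu_i^*a_{i+d}^*,$$ $$x\cdot e_i=\gamma_i(e_i-\lambda^{-1}e_{i+d}),\quad x\cdot a_i=\gamma_{i+1}a_i-\gamma_i\lambda^{-1}(g\cdot a_i),\quad x\cdot a_i^*=\gamma_i a_i^*-\gamma_{i+1}\lambda^{-1}(g\cdot a_i^* ),$$ for some integer $0<d\le n-1$ and scalars $\mu_i,\mu_i^*,\gamma_i\in\Bbbk^\times$, and that this action descends to an inner faithful action on $\Pi_Q$. Let $\tau=\gcd(n,d)$, so that $e_0,\dots,e_{\tau-1}$ form a complete set of representatives of the $g$-orbits on vertices. Then $\{\phi_0(e_i): i=0,\dots,\tau-1\}$ is a $\Bbbk$-basis of the degree-$0$ part $((\Pi_Q)^T)_0$ of the invariant ring; in particular the number of vertices supporting $(\Pi_Q)^T$ equals the number of $g$-orbits of vertices.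
   Context: Let $\Bbbk$ be a field, $r>1$ and $m$ positive integers with $r\mid m$, and $\lambda\in\Bbbk$ a primitive $r$-th root of unity, with $r$ coprime to the characteristic of $\Bbbk$. The generalized Taft algebra $T=T_\lambda(r,m)$ is the Hopf algebra generated by $g,x$ with relations $gx=\lambda xg$, $g^m=1$, $x^r=0$, $\Delta(g)=g\otimes g$, $\Delta(x)=1\otimes x+x\otimes g$, $\varepsilon(g)=1,\varepsilon(x)=0$, $S(g)=g^{-1}$, $S(x)=-xg^{-1}$. An action of $T$ on an algebra $A$ is a $T$-module algebra structure; so $g$ acts by an algebra automorphism and $x\cdot(ab)=a(x\cdot b)+(x\cdot a)(g\cdot b)$. It is inner faithful if no nonzero Hopf ideal $I$ of $T$ satisfies $I\cdot A=0$. Linear means $g$ preserves path length and $x$ maps vertices into the span of vertices and arrows into the span of vertices and arrows. Vertex indices are taken modulo $n$. $\overline{Q}$ has vertices $0,\dots,n-1$ and arrows $a_i:i\to i+1$, $a_i^*:i+1\to i$; in $\Bbbk\overline{Q}$, $e_i$ is the trivial path at $i$ and $pq$ is concatenation ($p$ then $q$) if the target of $p$ is the source of $q$, else $0$. $\Pi_Q=\Bbbk\overline{Q}/(\Omega)$, graded by path length, with $(\Omega)$ generated by $a_i^*a_i-a_{i+1}a_{i+1}^*$; the action descends if $(\Omega)$ is stable under $g$ and $x$. The invariant ring is $(\Pi_Q)^T=\{a\in\Pi_Q:h\cdot a=\varepsilon(h)a\ \forall h\in T\}$. For a path $p$ and integer $\alpha$, $\phi_\alpha(p)=\sum_{i=0}^{r-1}\lambda^{-\alpha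 i}g^i(p)$. *)

theory Defs
  imports Main
begin

(* ===== The path algebra k\<overline>Q of the doubled cyclic quiver with n vertices =====
   A path is encoded as (v, w): start vertex v (< n) and a list of steps;
   True  = an arrow a_u : u -> u+1,
   False = an arrow a_{u-1}^* : u -> u-1   (indices mod n). *)

type_synonym path = "nat \<times> bool list"

definition tgt :: "nat \<Rightarrow> nat \<Rightarrow> bool list \<Rightarrow> nat" where
  "tgt n v w = foldl (\<lambda>u b. if b then (u + 1) mod n else (u + n - 1) mod n) v w"

definition pathalg :: "nat \<Rightarrow> (path \<Rightarrow> 'k::field) set" where
  "pathalg n = {f. finite {p. f p \<noteq> 0} \<and> (\<forall>v w. f (v, w) \<noteq> 0 \<longrightarrow> v < n)}"

definition padd :: "(path \<Rightarrow> 'k::field) \<Rightarrow> (path \<Rightarrow> 'k) \<Rightarrow> path \<Rightarrow> 'k" where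
  "padd f h = (\<lambda>p. f p + h p)"

definition psub :: "(path \<Rightarrow> 'k::field) \<Rightarrow> (path \<Rightarrow> 'k) \<Rightarrow> path \<Rightarrow> 'k" where
  "psub f h = (\<lambda>p. f p - h p)"

definition psmul :: "'k::field \<Rightarrow> (path \<Rightarrow> 'k) \<Rightarrow> path \<Rightarrow> 'k" where
  "psmul c f = (\<lambda>p. c * f p)"

definition pzero :: "path \<Rightarrow> 'k::field" where
  "pzero = (\<lambda>p. 0)"

text \<open>Concatenation product: pq = p then q (zero unless target of p = source of q).\<close>
definition pmul :: "nat \<Rightarrow> (path \<Rightarrow> 'k::field) \<Rightarrow> (path \<Rightarrow> 'k) \<Rightarrow> path \<Rightarrow> 'k" where
  "pmul n f h = (\<lambda>(v, w). \<Sum>k\<in>{0..length w}. f (v, take k w) * h (tgt n v (take k w), drop k w))"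

definition pone :: "nat \<Rightarrow> path \<Rightarrow> 'k::field" where
  "pone n = (\<lambda>(v, w). if v < n \<and> w = [] then 1 else 0)"

text \<open>trivial path e_i, arrow a_i : i -> i+1, arrow a_i^* : i+1 -> i (indices mod n)\<close>
definition vtx :: "nat \<Rightarrow> nat \<Rightarrow> path \<Rightarrow> 'k::field" where
  "vtx n i = (\<lambda>p. if p = (i mod n, []) then 1 else 0)"

definition arr :: "nat \<Rightarrow> nat \<Rightarrow> path \<Rightarrow> 'k::field" where
  "arr n i = (\<lambda>p. if p = (i mod n, [True]) then 1 else 0)"

definition arrs :: "nat \<Rightarrow> nat \<Rightarrow> path \<Rightarrow> 'k::field" where
  "arrs n i = (\<lambda>p. if p = ((i + 1) mod n, [False]) then 1 else 0)"

definition omega :: "nat \<Rightarrow> nat \<Rightarrow> path \<Rightarrow> 'k::field" where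
  "omega n i = psub (pmul n (arrs n i) (arr n i)) (pmul n (arr n (i + 1)) (arrs n (i + 1)))"

definition is_ideal :: "nat \<Rightarrow> (path \<Rightarrow> 'k::field) set \<Rightarrow> bool" where
  "is_ideal n I \<longleftrightarrow> I \<subseteq> pathalg n \<and> pzero \<in> I
     \<and> (\<forall>a\<in>I. \<forall>b\<in>I. padd a b \<in> I)
     \<and> (\<forall>c. \<forall>a\<in>I. psmul c a \<in> I)
     \<and> (\<forall>a\<in>I. \<forall>b\<in>pathalg n. pmul n a b \<in> I \<and> pmul n b a \<in> I)"

text \<open>the two-sided ideal (\<Omega>) of k\<overline>Q; \<Pi>_Q = k\<overline>Q / (\<Omega>)\<close>
definition OmegaIdeal :: "nat \<Rightarrow> (path \<Rightarrow> 'k::field) set" where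
  "OmegaIdeal n = \<Inter> {I. is_ideal n I \<and> (\<forall>i<n. omega n i \<in> I)}"

(* ===== The generalized Taft algebra T = T_lam(r,m) =====
   Elements are coefficient functions c on the PBW basis g^i x^j (i<m, j<r). *)

definition Tcar :: "nat \<Rightarrow> nat \<Rightarrow> (nat \<times> nat \<Rightarrow> 'k::field) set" where
  "Tcar m r = {c. \<forall>i j. c (i, j) \<noteq> 0 \<longrightarrow> i < m \<and> j < r}"

text \<open>product: g^i x^j g^k x^l = lam^(-jk) g^(i+k) x^(j+l), zero if j+l >= r\<close>
definition tmul :: "nat \<Rightarrow> nat \<Rightarrow> 'k::field \<Rightarrow> (nat \<times> nat \<Rightarrow> 'k) \<Rightarrow> (nat \<times> nat \<Rightarrow> 'k) \<Rightarrow> nat \<times> nat \<Rightarrow> 'k" where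
  "tmul m r lam c c' = (\<lambda>(a, b). if a < m \<and> b < r then
      (\<Sum>i<m. \<Sum>j<r. \<Sum>k<m. \<Sum>l<r.
         if (i + k) mod m = a \<and> j + l = b then c (i, j) * c' (k, l) * (inverse lam) ^ (j * k) else 0)
    else 0)"

definition teps :: "nat \<Rightarrow> (nat \<times> nat \<Rightarrow> 'k::field) \<Rightarrow> 'k" where
  "teps m c = (\<Sum>i<m. c (i, 0))"

text \<open>Gaussian binomials B(j,k) with (u+v)^j = sum_k B(j,k) u^(j-k) v^k when v u = q u v\<close>
fun qbinom :: "'k::field \<Rightarrow> nat \<Rightarrow> nat \<Rightarrow> 'k" where
  "qbinom q 0 0 = 1"
| "qbinom q 0 (Suc k) = 0"
| "qbinom q (Suc j) 0 = 1"
| "qbinom q (Suc j) (Suc k) = q ^ Suc k * qbinom q j (Suc k) + qbinom q j k"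

definition tcoprod :: "nat \<Rightarrow> nat \<Rightarrow> 'k::field \<Rightarrow> (nat \<times> nat \<Rightarrow> 'k) \<Rightarrow> (nat \<times> nat) \<times> (nat \<times> nat) \<Rightarrow> 'k" where
  "tcoprod m r lam c = (\<lambda>((a, b), (a', b')).
     if a < m \<and> b + b' < r \<and> a' = (a + b) mod m
     then c (a, b + b') * qbinom lam (b + b') b * (inverse lam) ^ (b' * b) else 0)"

definition tantipode :: "nat \<Rightarrow> nat \<Rightarrow> 'k::field \<Rightarrow> (nat \<times> nat \<Rightarrow> 'k) \<Rightarrow> nat \<times> nat \<Rightarrow> 'k" where
  "tantipode m r lam c = (\<lambda>(a, b). \<Sum>i<m. \<Sum>j<r.
     if j = b \<and> a = (m - (i + j) mod m) mod m
     then c (i, j) * (-1) ^ j * lam ^ (j * (j + 1) div 2 + i * j) else 0)"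

definition hopf_ideal :: "nat \<Rightarrow> nat \<Rightarrow> 'k::field \<Rightarrow> (nat \<times> nat \<Rightarrow> 'k) set \<Rightarrow> bool" where
  "hopf_ideal m r lam I \<longleftrightarrow> I \<subseteq> Tcar m r \<and> (\<lambda>_. 0) \<in> I
     \<and> (\<forall>c\<in>I. \<forall>c'\<in>I. (\<lambda>p. c p + c' p) \<in> I)
     \<and> (\<forall>s. \<forall>c\<in>I. (\<lambda>p. s * c p) \<in> I)
     \<and> (\<forall>c\<in>I. \<forall>h\<in>Tcar m r. tmul m r lam c h \<in> I \<and> tmul m r lam h c \<in> I)
     \<and> (\<forall>c\<in>I. teps m c = 0)
     \<and> (\<forall>c\<in>I. tantipode m r lam c \<in> I)
     \<and> (\<forall>c\<in>I. \<exists>(N::nat) a b. (\<forall>k<N. a k \<in> Tcar m r \<and> b k \<in> Tcar m r \<and> (a k \<in> I \<or> b k \<in> I))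
            \<and> tcoprod m r lam c = (\<lambda>(p, q). \<Sum>k<N. a k p * b k q))"

definition tact :: "nat \<Rightarrow> nat \<Rightarrow> ((path \<Rightarrow> 'k::field) \<Rightarrow> (path \<Rightarrow> 'k)) \<Rightarrow> ((path \<Rightarrow> 'k) \<Rightarrow> (path \<Rightarrow> 'k))
     \<Rightarrow> (nat \<times> nat \<Rightarrow> 'k) \<Rightarrow> (path \<Rightarrow> 'k) \<Rightarrow> path \<Rightarrow> 'k" where
  "tact m r G X c a = (\<lambda>p. \<Sum>i<m. \<Sum>j<r. c (i, j) * (G ^^ i) ((X ^^ j) a) p)"

definition module_algebra :: "nat \<Rightarrow> nat \<Rightarrow> nat \<Rightarrow> 'k::field \<Rightarrow> ((path \<Rightarrow> 'k) \<Rightarrow> (path \<Rightarrow> 'k))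
     \<Rightarrow> ((path \<Rightarrow> 'k) \<Rightarrow> (path \<Rightarrow> 'k)) \<Rightarrow> bool" where
  "module_algebra n m r lam G X \<longleftrightarrow>
     (\<forall>a\<in>pathalg n. G a \<in> pathalg n \<and> X a \<in> pathalg n)
   \<and> (\<forall>a\<in>pathalg n. \<forall>b\<in>pathalg n. G (padd a b) = padd (G a) (G b) \<and> X (padd a b) = padd (X a) (X b))
   \<and> (\<forall>s. \<forall>a\<in>pathalg n. G (psmul s a) = psmul s (G a) \<and> X (psmul s a) = psmul s (X a))
   \<and> (\<forall>a\<in>pathalg n. (G ^^ m) a = a \<and> (X ^^ r) a = pzero \<and> G (X a) = psmul lam (X (G a)))
   \<and> (\<forall>a\<in>pathalg n. \<forall>b\<in>pathalg n. G (pmul n a b) = pmul n (G a) (G b)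
          \<and> X (pmul n a b) = padd (pmul n a (X b)) (pmul n (X a) (G b)))
   \<and> G (pone n) = pone n \<and> X (pone n) = pzero"

definition phi :: "nat \<Rightarrow> 'k::field \<Rightarrow> ((path \<Rightarrow> 'k) \<Rightarrow> (path \<Rightarrow> 'k)) \<Rightarrow> int \<Rightarrow> (path \<Rightarrow> 'k) \<Rightarrow> path \<Rightarrow> 'k" where
  "phi r lam G \<alpha> p = (\<lambda>q. \<Sum>i<r.
     (if \<alpha> \<ge> 0 then (inverse lam) ^ (nat \<alpha> * i) else lam ^ (nat (- \<alpha>) * i)) * (G ^^ i) p q)"

end

theory Submission
  imports Defs "HOL-Number_Theory.Cong"
begin

(* The g-orbits of vertices are the cosets of the subgroup generated by d in Z/n: they have
   n / gcd(n, d) elements, with representatives 0, ..., gcd(n, d) - 1. Comparing the coefficients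
   of e_(j+d) in g x e_j = lam x g e_j gives gamma_j = lam gamma_(j+d); as lam is a primitive r-th
   root of unity and g^r = 1, the order of d in Z/n is exactly r. So phi_0(e_i) is the sum of the
   vertices of the orbit of i; it is fixed by g and killed by x (the images under x telescope
   around the orbit), hence invariant. The relations of Pi_Q have length 2, so (Omega) has no
   degree-0 component: the orbit sums stay linearly independent in Pi_Q, and a degree-0 element
   whose class is g-invariant has coefficients that are constant on orbits. *)

lemma dvd_mult_iff_div_gcd_dvd:
  fixes n d k :: nat
  assumes "0 < n"
  shows "n dvd k * d \<longleftrightarrow> n div gcd n d dvd k"
proof -
  define g where "g = gcd n d"
  define s where "s = n div g"
  define d' where "d' = d div g"
  have "g \<noteq> 0" using assms by (simp add: g_def)
  have n: "n = g * s" and d: "d = g * d'"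
    by (simp_all add: g_def s_def d'_def)
  have "coprime s d'"
    unfolding s_def d'_def g_def using assms by (intro div_gcd_coprime) simp
  have "n dvd k * d \<longleftrightarrow> g * s dvd g * (k * d')"
    by (subst n, subst d) (simp only: mult.left_commute)
  also have "\<dots> \<longleftrightarrow> s dvd k * d'"
    using \<open>g \<noteq> 0\<close> by simp
  also have "\<dots> \<longleftrightarrow> s dvd k"
    using \<open>coprime s d'\<close> by (simp add: coprime_dvd_mult_left_iff)
  finally show ?thesis by (simp add: s_def g_def)
qed

lemma order_eq_div_gcd:
  fixes n d r :: nat
  assumes "0 < n" "0 < r" "n dvd r * d" "\<And>k. 0 < k \<Longrightarrow> k < r \<Longrightarrow> \<not> n dvd k * d"
  shows "r = n div gcd n d"
proof -
  have "n div gcd n d dvd r"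
    using assms(3) by (simp add: dvd_mult_iff_div_gcd_dvd[OF assms(1)])
  then have "n div gcd n d \<le> r" using assms(2) by (rule dvd_imp_le)
  moreover have "n dvd (n div gcd n d) * d"
    by (simp add: dvd_mult_iff_div_gcd_dvd[OF assms(1)])
  then have "\<not> n div gcd n d < r"
    using assms(1) assms(4)[of "n div gcd n d"] by (auto simp: div_greater_zero_iff)
  ultimately show ?thesis by simp
qed

lemma dvd_div_gcd_mult: "n dvd n div gcd n d * (d :: nat)"
  by (metis div_mult_swap dvd_def dvd_div_mult gcd_dvd1 gcd_dvd2)

lemma orbit_wrap_mod: "(i + n div gcd n d * d) mod n = (i mod n :: nat)"
proof -
  obtain e where "n div gcd n d * d = n * e" using dvd_div_gcd_mult[of n d] by (rule dvdE)
  then show ?thesis by simp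
qed

lemma mod_add_right_inj:
  fixes u v d n :: nat
  assumes "u < n" "v < n" "(u + d) mod n = (v + d) mod n"
  shows "u = v"
  using assms cong_add_rcancel_nat[of u d v n] by (simp add: cong_def)

lemma mod_mult_right_inj:
  fixes n d k k' :: nat
  assumes "0 < n" "k < n div gcd n d" "k' < n div gcd n d" "k * d mod n = k' * d mod n"
  shows "k = k'"
proof -
  have ordered: "k = k'" if "k \<le> k'" "k * d mod n = k' * d mod n" "k' < n div gcd n d" for k k'
  proof -
    have "n dvd (k' - k) * d"
      using that(1,2) mod_eq_dvd_iff_nat[of "k * d" "k' * d" n] by (simp add: diff_mult_distrib)
    then have "n div gcd n d dvd k' - k" using assms(1) dvd_mult_iff_div_gcd_dvd by blast
    moreover have "k' - k < n div gcd n d" using that(3) by simp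
    ultimately have "k' - k = 0" by (cases "k' - k = 0") (auto dest: dvd_imp_le)
    then show ?thesis using that(1) by simp
  qed
  show ?thesis using assms(2-4) ordered[of k k'] ordered[of k' k] by (cases "k \<le> k'") auto
qed

lemma translation_orbits_bij:
  fixes n d :: nat
  assumes "0 < n"
  shows "bij_betw (\<lambda>(i, k). (i + k * d) mod n) ({..<gcd n d} \<times> {..<n div gcd n d}) {..<n}"
proof -
  let ?f = "\<lambda>(i, k). (i + k * d) mod n"
  have "i = i' \<and> k = k'"
    if i: "i < gcd n d" "i' < gcd n d" and k: "k < n div gcd n d" "k' < n div gcd n d"
      and eq: "(i + k * d) mod n = (i' + k' * d) mod n" for i i' k k'
  proof -
    have "(i + k * d) mod gcd n d = (i' + k' * d) mod gcd n d"
      using eq by (metis gcd_dvd1 mod_mod_cancel)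
    moreover have "k * d mod gcd n d = 0" "k' * d mod gcd n d = 0" by simp_all
    ultimately have "i = i'" using i by (metis mod_add_right_eq add_0_right mod_less)
    then have "k * d mod n = k' * d mod n"
      using eq cong_add_lcancel_nat unfolding cong_def by blast
    with \<open>i = i'\<close> show ?thesis using mod_mult_right_inj[OF assms k] by blast
  qed
  then have "inj_on ?f ({..<gcd n d} \<times> {..<n div gcd n d})"
    by (auto simp: inj_on_def)
  moreover have "?f ` ({..<gcd n d} \<times> {..<n div gcd n d}) = {..<n}"
  proof (rule card_subset_eq)
    show "?f ` ({..<gcd n d} \<times> {..<n div gcd n d}) \<subseteq> {..<n}" using assms by auto
    show "card (?f ` ({..<gcd n d} \<times> {..<n div gcd n d})) = card {..<n}"
      using card_image[OF calculation] by (simp add: card_cartesian_product)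
  qed simp
  ultimately show ?thesis by (rule bij_betw_imageI)
qed

lemma shift_invariant_const_on_orbit:
  fixes f :: "nat \<Rightarrow> 'a"
  assumes "0 < n" "i < n" and shift: "\<And>u. u < n \<Longrightarrow> f ((u + d) mod n) = f u"
  shows "f ((i + k * d) mod n) = f i"
proof (induction k)
  case (Suc k)
  have "i + Suc k * d = (i + k * d) + d" by simp
  then have "(i + Suc k * d) mod n = ((i + k * d) mod n + d) mod n"
    by (metis mod_add_left_eq)
  then show ?case using Suc shift[of "(i + k * d) mod n"] assms(1) by simp
qed (use assms(2) in simp)

lemma pzero_in_pathalg: "pzero \<in> pathalg n"
  by (simp add: pathalg_def pzero_def)

lemma padd_in_pathalg: "a \<in> pathalg n \<Longrightarrow> b \<in> pathalg n \<Longrightarrow> padd a b \<in> pathalg n"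
  unfolding pathalg_def padd_def
proof safe
  assume "finite {p. a p \<noteq> 0}" "finite {p. b p \<noteq> 0}"
  then show "finite {p. a p + b p \<noteq> 0}"
    by (rule finite_subset[rotated, OF finite_UnI]) auto
next
  fix v w
  assume "\<forall>v w. a (v, w) \<noteq> 0 \<longrightarrow> v < n" "\<forall>v w. b (v, w) \<noteq> 0 \<longrightarrow> v < n"
    and "a (v, w) + b (v, w) \<noteq> 0"
  then show "v < n" by (metis add.right_neutral add_0)
qed

lemma psmul_in_pathalg: "a \<in> pathalg n \<Longrightarrow> psmul c a \<in> pathalg n"
  unfolding pathalg_def psmul_def by (auto elim: finite_subset[rotated])

lemma psub_in_pathalg:
  assumes "a \<in> pathalg n" "b \<in> pathalg n"
  shows "psub a b \<in> pathalg n"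
proof -
  have "psub a b = padd a (psmul (-1) b)" by (simp add: psub_def padd_def psmul_def)
  then show ?thesis using assms by (simp add: padd_in_pathalg psmul_in_pathalg)
qed

lemma vtx_in_pathalg: "0 < n \<Longrightarrow> vtx n i \<in> pathalg n"
  unfolding pathalg_def vtx_def by auto

lemma arr_in_pathalg: "0 < n \<Longrightarrow> arr n i \<in> pathalg n"
  unfolding pathalg_def arr_def by auto

lemma arrs_in_pathalg: "0 < n \<Longrightarrow> arrs n i \<in> pathalg n"
  unfolding pathalg_def arrs_def by auto

lemma pmul_nonzero_split:
  assumes "pmul n a b (v, w) \<noteq> 0"
  obtains k where "a (v, take k w) \<noteq> 0" "b (tgt n v (take k w), drop k w) \<noteq> 0"
proof -
  obtain k where "a (v, take k w) * b (tgt n v (take k w), drop k w) \<noteq> 0"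
    using assms unfolding pmul_def by (auto elim: sum.not_neutral_contains_not_neutral)
  then show thesis using that by auto
qed

lemma pmul_in_pathalg:
  assumes a: "a \<in> pathalg n" and b: "b \<in> pathalg n"
  shows "pmul n a b \<in> pathalg n"
proof -
  let ?Sa = "{p. a p \<noteq> 0}" and ?Sb = "{p. b p \<noteq> 0}"
  let ?S = "fst ` ?Sa \<times> (\<lambda>(x, y). x @ y) ` (snd ` ?Sa \<times> snd ` ?Sb)"
  have "{p. pmul n a b p \<noteq> 0} \<subseteq> ?S"
  proof
    fix p assume "p \<in> {p. pmul n a b p \<noteq> 0}"
    moreover obtain v w where p: "p = (v, w)" by fastforce
    ultimately have "pmul n a b (v, w) \<noteq> 0" by simp
    then obtain k where "(v, take k w) \<in> ?Sa" "(tgt n v (take k w), drop k w) \<in> ?Sb"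
      by (auto elim: pmul_nonzero_split)
    then have "v \<in> fst ` ?Sa" "(take k w, drop k w) \<in> snd ` ?Sa \<times> snd ` ?Sb"
      by force+
    moreover have "w = (\<lambda>(x, y). x @ y) (take k w, drop k w)" by simp
    ultimately show "p \<in> ?S" unfolding p by blast
  qed
  moreover have "finite ?S" using a b by (simp add: pathalg_def)
  moreover have "v < n" if "pmul n a b (v, w) \<noteq> 0" for v w
    using that a by (auto elim: pmul_nonzero_split simp: pathalg_def)
  ultimately show ?thesis by (auto simp: pathalg_def intro: finite_subset)
qed

definition arrow_ideal :: "nat \<Rightarrow> (path \<Rightarrow> 'k::field) set" where
  "arrow_ideal n = {f \<in> pathalg n. \<forall>v. f (v, []) = 0}"

lemma pmul_trivial_path: "pmul n a b (v, []) = a (v, []) * b (v, [])"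
  by (simp add: pmul_def tgt_def)

lemma is_ideal_arrow_ideal: "is_ideal n (arrow_ideal n)"
  unfolding is_ideal_def arrow_ideal_def
  using pzero_in_pathalg padd_in_pathalg psmul_in_pathalg pmul_in_pathalg
  by (auto simp: pmul_trivial_path pzero_def padd_def psmul_def)

lemma omega_in_arrow_ideal: "0 < n \<Longrightarrow> omega n i \<in> arrow_ideal n"
  unfolding arrow_ideal_def omega_def
  by (simp add: psub_in_pathalg pmul_in_pathalg arr_in_pathalg arrs_in_pathalg)
    (simp add: psub_def pmul_trivial_path arrs_def arr_def)

lemma OmegaIdeal_subset_arrow_ideal: "0 < n \<Longrightarrow> OmegaIdeal n \<subseteq> arrow_ideal n"
  unfolding OmegaIdeal_def using is_ideal_arrow_ideal omega_in_arrow_ideal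
  by (intro Inter_lower) auto

lemma OmegaIdeal_trivial_path: "0 < n \<Longrightarrow> f \<in> OmegaIdeal n \<Longrightarrow> f (v, []) = 0"
  using OmegaIdeal_subset_arrow_ideal unfolding arrow_ideal_def by blast

lemma pzero_in_OmegaIdeal: "pzero \<in> OmegaIdeal n"
  unfolding OmegaIdeal_def is_ideal_def by auto

lemma degree_zero_expansion:
  assumes "a \<in> pathalg n" and "\<forall>v w. a (v, w) \<noteq> 0 \<longrightarrow> w = []"
  shows "a = (\<lambda>p. \<Sum>v<n. a (v, []) * vtx n v p)"
proof
  fix p :: path
  obtain u w where p: "p = (u, w)" by fastforce
  show "a p = (\<Sum>v<n. a (v, []) * vtx n v p)"
  proof (cases "w = [] \<and> u < n")
    case True
    then have "(\<Sum>v<n. a (v, []) * vtx n v p) = (\<Sum>v<n. if v = u then a (u, []) else 0)"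
      by (intro sum.cong) (auto simp: p vtx_def)
    then show ?thesis using True p by simp
  next
    case False
    then have "a p = 0" using assms by (auto simp: p pathalg_def)
    moreover have "vtx n v p = 0" if "v < n" for v
      using False that by (auto simp: p vtx_def)
    ultimately show ?thesis by (metis (no_types, lifting) lessThan_iff mult_zero_right sum.neutral)
  qed
qed

definition plinear :: "nat \<Rightarrow> ((path \<Rightarrow> 'k::field) \<Rightarrow> (path \<Rightarrow> 'k)) \<Rightarrow> bool" where
  "plinear n F \<longleftrightarrow> (\<forall>a\<in>pathalg n. \<forall>b\<in>pathalg n. F (padd a b) = padd (F a) (F b))
     \<and> (\<forall>s. \<forall>a\<in>pathalg n. F (psmul s a) = psmul s (F a))"

lemma plinear_pzero:
  assumes "plinear n F"
  shows "F pzero = pzero"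
proof -
  have "F pzero = F (psmul 0 pzero)" by (simp add: psmul_def pzero_def)
  also have "\<dots> = psmul 0 (F pzero)"
    using assms pzero_in_pathalg unfolding plinear_def by blast
  finally show ?thesis by (simp add: psmul_def pzero_def)
qed

lemma sum_in_pathalg:
  "finite S \<Longrightarrow> (\<forall>k\<in>S. f k \<in> pathalg n) \<Longrightarrow> (\<lambda>p. \<Sum>k\<in>S. c k * f k p) \<in> pathalg n"
proof (induction S rule: finite_induct)
  case empty
  then show ?case using pzero_in_pathalg by (simp add: pzero_def)
next
  case (insert x S)
  then have "padd (psmul (c x) (f x)) (\<lambda>p. \<Sum>k\<in>S. c k * f k p) \<in> pathalg n"
    by (simp add: padd_in_pathalg psmul_in_pathalg)
  with insert show ?case by (simp add: padd_def psmul_def)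
qed

lemma plinear_sum:
  assumes F: "plinear n F"
  shows "finite S \<Longrightarrow> (\<forall>k\<in>S. f k \<in> pathalg n)
    \<Longrightarrow> F (\<lambda>p. \<Sum>k\<in>S. c k * f k p) = (\<lambda>p. \<Sum>k\<in>S. c k * F (f k) p)"
proof (induction S rule: finite_induct)
  case empty
  then show ?case using plinear_pzero[OF F] by (simp add: pzero_def)
next
  case (insert x S)
  have "(\<lambda>p. \<Sum>k\<in>insert x S. c k * f k p) = padd (psmul (c x) (f x)) (\<lambda>p. \<Sum>k\<in>S. c k * f k p)"
    using insert by (simp add: padd_def psmul_def)
  moreover have "(\<lambda>p. \<Sum>k\<in>S. c k * f k p) \<in> pathalg n"
    using insert by (simp add: sum_in_pathalg)
  ultimately show ?case
    using insert F by (simp add: plinear_def psmul_in_pathalg) (simp add: padd_def psmul_def)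
qed

lemma vtx_mod: "vtx n (i mod n) = vtx n i"
  by (simp add: vtx_def)

lemma vtx_mod_add: "vtx n (i mod n + d) = vtx n (i + d)"
  by (simp add: vtx_def mod_add_left_eq)

definition orbit_sum :: "nat \<Rightarrow> nat \<Rightarrow> nat \<Rightarrow> path \<Rightarrow> 'k::field" where
  "orbit_sum n d i = (\<lambda>q. \<Sum>k < n div gcd n d. vtx n (i + k * d) q)"

lemma orbit_sum_apply:
  "orbit_sum n d i (v, w) = (\<Sum>k < n div gcd n d. if v = (i + k * d) mod n \<and> w = [] then 1 else 0)"
  by (simp add: orbit_sum_def vtx_def)

lemma orbit_sum_off_vertices: "0 < n \<Longrightarrow> w \<noteq> [] \<or> n \<le> v \<Longrightarrow> orbit_sum n d i (v, w) = 0"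
  by (auto simp: orbit_sum_apply intro!: sum.neutral) (meson leD mod_less_divisor)

lemma orbit_sum_at_orbit_point:
  assumes "0 < n" "i < gcd n d" "i0 < gcd n d" "k0 < n div gcd n d"
  shows "orbit_sum n d i ((i0 + k0 * d) mod n, []) = (if i = i0 then 1 else 0)"
proof -
  have "(i0 + k0 * d) mod n = (i + k * d) mod n \<longleftrightarrow> i = i0 \<and> k = k0"
    if "k < n div gcd n d" for k
  proof
    assume "(i0 + k0 * d) mod n = (i + k * d) mod n"
    then show "i = i0 \<and> k = k0"
      using bij_betw_imp_inj_on[OF translation_orbits_bij[OF assms(1), of d]] assms(2-4) that
      unfolding inj_on_def by fastforce
  qed simp
  then have "orbit_sum n d i ((i0 + k0 * d) mod n, [])
      = (\<Sum>k < n div gcd n d. if i = i0 \<and> k = k0 then 1 else 0)"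
    unfolding orbit_sum_apply by (intro sum.cong) auto
  also have "\<dots> = (if i = i0 then 1 else 0)"
    using assms(4) by (cases "i = i0") simp_all
  finally show ?thesis .
qed

lemma orbit_sum_combination_at_representative:
  assumes "0 < n" "j < gcd n d"
  shows "(\<Sum>i < gcd n d. c i * orbit_sum n d i (j, [])) = c j"
proof -
  have "j < n" using assms gcd_le1_nat[of n d] by linarith
  then have delta: "orbit_sum n d i (j, []) = (if i = j then 1 else 0)" if "i < gcd n d" for i
    using orbit_sum_at_orbit_point[OF assms(1) that assms(2), of 0] assms(1)
    by (simp add: div_greater_zero_iff)
  then have "(\<Sum>i < gcd n d. c i * orbit_sum n d i (j, [])) = (\<Sum>i < gcd n d. if i = j then c j else 0)"
    by (intro sum.cong) (simp_all add: delta)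
  then show ?thesis using assms(2) by simp
qed

lemma orbit_sums_independent:
  assumes "0 < n" and "(\<lambda>p. \<Sum>i < gcd n d. c i * orbit_sum n d i p) \<in> OmegaIdeal n"
    and "j < gcd n d"
  shows "c j = 0"
  using OmegaIdeal_trivial_path[OF assms(1,2), of j] orbit_sum_combination_at_representative[OF assms(1,3), of c]
  by simp

lemma orbit_shift_invariant_eq_orbit_sums:
  assumes "0 < n" and "a \<in> pathalg n" and "\<forall>v w. a (v, w) \<noteq> 0 \<longrightarrow> w = []"
    and shift: "\<And>u. u < n \<Longrightarrow> a ((u + d) mod n, []) = a (u, [])"
  shows "a = (\<lambda>p. \<Sum>i < gcd n d. a (i, []) * orbit_sum n d i p)"
proof
  fix p :: path
  obtain v w where p: "p = (v, w)" by fastforce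
  show "a p = (\<Sum>i < gcd n d. a (i, []) * orbit_sum n d i p)"
  proof (cases "w = [] \<and> v < n")
    case True
    then have "v \<in> (\<lambda>(i, k). (i + k * d) mod n) ` ({..<gcd n d} \<times> {..<n div gcd n d})"
      using bij_betw_imp_surj_on[OF translation_orbits_bij[OF assms(1), of d]] by simp
    then obtain i0 k0 where i0: "i0 < gcd n d" and k0: "k0 < n div gcd n d"
      and v: "v = (i0 + k0 * d) mod n"
      by auto
    have "(\<Sum>i < gcd n d. a (i, []) * orbit_sum n d i p) = (\<Sum>i < gcd n d. if i = i0 then a (i0, []) else 0)"
      using True by (intro sum.cong) (simp_all add: p v orbit_sum_at_orbit_point[OF assms(1) _ i0 k0])
    also have "\<dots> = a (i0, [])" using i0 by simp
    also have "\<dots> = a p"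
      using shift_invariant_const_on_orbit[of n i0 "\<lambda>u. a (u, [])", OF assms(1) _ shift]
        i0 gcd_le1_nat[of n d] assms(1) True by (simp add: p v less_le_trans)
    finally show ?thesis ..
  next
    case False
    then have "a p = 0" using assms(2,3) by (auto simp: p pathalg_def)
    moreover have "(\<Sum>i < gcd n d. a (i, []) * orbit_sum n d i p) = 0"
      using False assms(1) by (auto simp: p orbit_sum_off_vertices intro!: sum.neutral)
    ultimately show ?thesis by simp
  qed
qed

definition tmonom :: "nat \<Rightarrow> nat \<Rightarrow> nat \<times> nat \<Rightarrow> 'k::field" where
  "tmonom i j = (\<lambda>ij. if ij = (i, j) then 1 else 0)"

lemma tmonom_in_Tcar: "i < m \<Longrightarrow> j < r \<Longrightarrow> tmonom i j \<in> Tcar m r"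
  by (simp add: Tcar_def tmonom_def)

lemma teps_tmonom: "i < m \<Longrightarrow> teps m (tmonom i j) = (if j = 0 then 1 else 0)"
  by (simp add: teps_def tmonom_def)

lemma tact_tmonom:
  assumes "i < m" "j < r"
  shows "tact m r G X (tmonom i j) a = (G ^^ i) ((X ^^ j) a)"
proof
  fix p
  let ?F = "\<lambda>i j. (G ^^ i) ((X ^^ j) a) p"
  have "(\<Sum>j' < r. tmonom i j (i', j') * ?F i' j') = (if i' = i then ?F i j else 0)" for i'
  proof -
    have "(\<Sum>j' < r. tmonom i j (i', j') * ?F i' j') = (\<Sum>j' < r. if j' = j then (if i' = i then ?F i j else 0) else 0)"
      by (intro sum.cong) (auto simp: tmonom_def)
    then show ?thesis using assms(2) by simp
  qed
  then show "tact m r G X (tmonom i j) a p = (G ^^ i) ((X ^^ j) a) p"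
    using assms(1) by (simp add: tact_def)
qed

lemma tact_of_invariant:
  assumes "0 < r" "G P = P" "X P = pzero" "G pzero = pzero" "X pzero = pzero"
  shows "tact m r G X c P = psmul (teps m c) P"
proof -
  have G_pow: "(G ^^ i) Q = Q" if "G Q = Q" for i Q
    using that by (induction i) simp_all
  have X_pow: "X ((X ^^ j) P) = pzero" for j
    using assms(3,5) by (induction j) simp_all
  have G_pow_pzero: "(G ^^ i) pzero p = 0" for i p
    using G_pow[OF assms(4)] by (simp add: pzero_def)
  have "(\<Sum>j<r. c (i, j) * (G ^^ i) ((X ^^ j) P) p) = c (i, 0) * P p" for i p
  proof -
    have "(\<Sum>j<r. c (i, j) * (G ^^ i) ((X ^^ j) P) p) = (\<Sum>j<r. if j = 0 then c (i, 0) * P p else 0)"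
      by (intro sum.cong) (auto simp: G_pow assms(2) X_pow G_pow_pzero gr0_conv_Suc)
    then show ?thesis using assms(1) by simp
  qed
  then show ?thesis by (simp add: tact_def teps_def psmul_def sum_distrib_right)
qed

locale vertex_shift_action =
  fixes n d :: nat and lam :: "'k::field" and \<gamma> :: "nat \<Rightarrow> 'k"
    and G X :: "(path \<Rightarrow> 'k) \<Rightarrow> path \<Rightarrow> 'k"
  assumes n_pos: "0 < n" and shift_nontrivial: "\<not> n dvd d" and lam_nonzero: "lam \<noteq> 0"
    and G_linear: "plinear n G" and X_linear: "plinear n X"
    and G_X_commute: "\<forall>a\<in>pathalg n. G (X a) = psmul lam (X (G a))"
    and G_vtx_base: "\<forall>i<n. G (vtx n i) = vtx n (i + d)"
    and X_vtx_base: "\<forall>i<n. X (vtx n i) =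
      psmul (\<gamma> i) (psub (vtx n i) (psmul (inverse lam) (vtx n (i + d))))"
begin

lemma G_vtx: "G (vtx n i) = vtx n (i + d)"
  using G_vtx_base n_pos by (metis mod_less_divisor vtx_mod vtx_mod_add)

lemma G_pow_vtx: "(G ^^ k) (vtx n i) = vtx n (i + k * d)"
  by (induction k) (simp_all add: G_vtx algebra_simps)

lemma X_vtx:
  "X (vtx n i) q = \<gamma> (i mod n) * vtx n i q - \<gamma> (i mod n) * inverse lam * vtx n (i + d) q"
  using X_vtx_base[rule_format, of "i mod n", unfolded vtx_mod vtx_mod_add] n_pos
  by (simp add: psmul_def psub_def algebra_simps)

lemma gamma_shift:
  assumes "j < n"
  shows "\<gamma> j = lam * \<gamma> ((j + d) mod n)"
proof -
  let ?v = "(j + d) mod n"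
  have "(j + d + d) mod n \<noteq> ?v"
  proof
    assume "(j + d + d) mod n = ?v"
    then have "[j + d + d = j + d + 0] (mod n)" by (simp add: cong_def)
    then have "[d = 0] (mod n)" using cong_add_lcancel_nat[of "j + d" d 0 n] by simp
    then have "n dvd d" by (simp add: cong_0_iff)
    with shift_nontrivial show False ..
  qed
  then have vtx_at_v: "vtx n (j + d) (?v, []) = 1" "vtx n (j + d + d) (?v, []) = 0"
    by (simp_all add: vtx_def)
  have "X (vtx n j) = padd (psmul (\<gamma> j) (vtx n j)) (psmul (- (\<gamma> j * inverse lam)) (vtx n (j + d)))"
    using assms by (auto simp: X_vtx padd_def psmul_def)
  then have "G (X (vtx n j)) =
      padd (psmul (\<gamma> j) (vtx n (j + d))) (psmul (- (\<gamma> j * inverse lam)) (vtx n (j + d + d)))"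
    using G_linear n_pos by (simp add: plinear_def vtx_in_pathalg psmul_in_pathalg G_vtx)
  then have "G (X (vtx n j)) (?v, []) = \<gamma> j"
    by (simp add: padd_def psmul_def vtx_at_v)
  moreover have "psmul lam (X (G (vtx n j))) (?v, []) = lam * \<gamma> ?v"
    by (simp add: G_vtx psmul_def X_vtx vtx_at_v)
  moreover have "G (X (vtx n j)) = psmul lam (X (G (vtx n j)))"
    using G_X_commute vtx_in_pathalg[OF n_pos] by blast
  ultimately show ?thesis by metis
qed

lemma gamma_shift_pow:
  assumes "j < n"
  shows "\<gamma> j = lam ^ k * \<gamma> ((j + k * d) mod n)"
proof (induction k)
  case (Suc k)
  have "j + Suc k * d = (j + k * d) + d" by simp
  then have "(j + Suc k * d) mod n = ((j + k * d) mod n + d) mod n"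
    by (metis mod_add_left_eq)
  then show ?case
    using Suc gamma_shift[of "(j + k * d) mod n"] n_pos by simp
qed (use assms in simp)

lemma orbit_length:
  assumes "0 < r" and "(G ^^ r) (vtx n 0) = vtx n 0" and "\<gamma> 0 \<noteq> 0"
    and "\<forall>k. 0 < k \<and> k < r \<longrightarrow> lam ^ k \<noteq> 1"
  shows "r = n div gcd n d"
proof (rule order_eq_div_gcd[OF n_pos assms(1)])
  have "vtx n (r * d) (0, []) = (vtx n 0 (0, []) :: 'k)"
    using assms(2) by (simp add: G_pow_vtx)
  then show "n dvd r * d" by (simp add: vtx_def dvd_eq_mod_eq_0 split: if_splits)
next
  fix k assume "0 < k" "k < r"
  show "\<not> n dvd k * d"
  proof
    assume "n dvd k * d"
    then have "\<gamma> 0 = lam ^ k * \<gamma> 0" using gamma_shift_pow[of 0 k] n_pos by simp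
    with assms(3,4) \<open>0 < k\<close> \<open>k < r\<close> show False by simp
  qed
qed

lemma phi_vtx: "phi (n div gcd n d) lam G 0 (vtx n i) = orbit_sum n d i"
  by (simp add: phi_def G_pow_vtx orbit_sum_def)

lemma G_orbit_sum: "G (orbit_sum n d i) = orbit_sum n d i"
proof
  fix q
  let ?s = "n div gcd n d"
  define f where "f k = (vtx n (i + k * d) q :: 'k)" for k
  have "G (orbit_sum n d i) = (\<lambda>q. \<Sum>k < ?s. vtx n (i + k * d + d) q)"
    using plinear_sum[OF G_linear, of "{..<?s}" "\<lambda>k. vtx n (i + k * d)" "\<lambda>_. 1"] n_pos
    by (simp add: orbit_sum_def vtx_in_pathalg G_vtx)
  also have "\<dots> = (\<lambda>q. \<Sum>k < ?s. vtx n (i + Suc k * d) q)"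
    by (simp add: algebra_simps)
  finally have "G (orbit_sum n d i) q = (\<Sum>k < ?s. f (Suc k))"
    by (simp add: f_def)
  moreover have "(\<Sum>k < ?s. f (Suc k)) + f 0 = (\<Sum>k < ?s. f k) + f ?s"
    using sum.lessThan_Suc_shift[of f ?s] sum.lessThan_Suc[of f ?s] by simp
  moreover have "f ?s = f 0" by (simp add: f_def vtx_def orbit_wrap_mod)
  ultimately show "G (orbit_sum n d i) q = orbit_sum n d i q"
    by (simp add: orbit_sum_def f_def)
qed

lemma X_orbit_sum: "X (orbit_sum n d i) = pzero"
proof
  fix q
  let ?s = "n div gcd n d"
  define E where "E k = \<gamma> ((i + k * d) mod n) * vtx n (i + k * d) q" for k
  have "X (vtx n (i + k * d)) q = E k - E (Suc k)" for k
  proof -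
    have next_vertex: "i + k * d + d = i + Suc k * d" by simp
    then have "(i + Suc k * d) mod n = ((i + k * d) mod n + d) mod n"
      by (metis mod_add_left_eq)
    then have "\<gamma> ((i + k * d) mod n) * inverse lam = \<gamma> ((i + Suc k * d) mod n)"
      using gamma_shift[of "(i + k * d) mod n"] n_pos lam_nonzero by simp
    then show ?thesis by (simp only: X_vtx E_def next_vertex mult.assoc)
  qed
  moreover have "E ?s = E 0"
    by (simp add: E_def vtx_def orbit_wrap_mod)
  moreover have "X (orbit_sum n d i) = (\<lambda>q. \<Sum>k < ?s. X (vtx n (i + k * d)) q)"
    using plinear_sum[OF X_linear, of "{..<?s}" "\<lambda>k. vtx n (i + k * d)" "\<lambda>_. 1"] n_pos
    by (simp add: orbit_sum_def vtx_in_pathalg)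
  ultimately show "X (orbit_sum n d i) q = pzero q"
    by (simp add: sum_lessThan_telescope' pzero_def)
qed

lemma G_degree_zero_shift:
  assumes "a \<in> pathalg n" and "\<forall>v w. a (v, w) \<noteq> 0 \<longrightarrow> w = []" and "u < n"
  shows "G a ((u + d) mod n, []) = a (u, [])"
proof -
  have "G a = G (\<lambda>p. \<Sum>v<n. a (v, []) * vtx n v p)"
    using degree_zero_expansion[OF assms(1,2)] by (rule arg_cong)
  also have "\<dots> = (\<lambda>p. \<Sum>v<n. a (v, []) * vtx n (v + d) p)"
    using plinear_sum[OF G_linear, of "{..<n}" "vtx n" "\<lambda>v. a (v, [])"] n_pos
    by (simp add: vtx_in_pathalg G_vtx)
  finally have "G a ((u + d) mod n, []) = (\<Sum>v<n. a (v, []) * vtx n (v + d) ((u + d) mod n, []))"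
    by simp
  also have "\<dots> = (\<Sum>v<n. if v = u then a (u, []) else 0)"
    using mod_add_right_inj[OF assms(3), of _ d] by (intro sum.cong) (auto simp: vtx_def)
  finally show ?thesis using assms(3) by simp
qed

lemma degree_zero_invariant_eq_orbit_sums:
  assumes "a \<in> pathalg n" and "\<forall>v w. a (v, w) \<noteq> 0 \<longrightarrow> w = []"
    and "psub (G a) a \<in> OmegaIdeal n"
  shows "a = (\<lambda>p. \<Sum>i < gcd n d. a (i, []) * orbit_sum n d i p)"
proof (rule orbit_shift_invariant_eq_orbit_sums[OF n_pos assms(1,2)])
  fix u assume "u < n"
  have "G a ((u + d) mod n, []) = a ((u + d) mod n, [])"
    using OmegaIdeal_trivial_path[OF n_pos assms(3)] by (simp add: psub_def)
  then show "a ((u + d) mod n, []) = a (u, [])"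
    using G_degree_zero_shift[OF assms(1,2) \<open>u < n\<close>] by simp
qed

lemma orbit_sum_invariant:
  assumes "0 < r"
  shows "psub (tact m r G X c (orbit_sum n d i)) (psmul (teps m c) (orbit_sum n d i)) \<in> OmegaIdeal n"
proof -
  have "tact m r G X c (orbit_sum n d i) = psmul (teps m c) (orbit_sum n d i)"
    using assms G_orbit_sum X_orbit_sum plinear_pzero[OF G_linear] plinear_pzero[OF X_linear]
    by (rule tact_of_invariant)
  then show ?thesis using pzero_in_OmegaIdeal by (simp add: psub_def pzero_def)
qed

lemma invariant_degree_zero_in_orbit_span:
  assumes "1 < m" "0 < r" and a: "a \<in> pathalg n" "\<forall>v w. a (v, w) \<noteq> 0 \<longrightarrow> w = []"
    and invariant: "\<forall>c\<in>Tcar m r. psub (tact m r G X c a) (psmul (teps m c) a) \<in> OmegaIdeal n"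
  shows "\<exists>c. psub a (\<lambda>p. \<Sum>i < gcd n d. c i * orbit_sum n d i p) \<in> OmegaIdeal n"
proof -
  have "psub (tact m r G X (tmonom 1 0) a) (psmul (teps m (tmonom 1 0)) a) \<in> OmegaIdeal n"
    using invariant tmonom_in_Tcar assms(1,2) by blast
  then have "psub (G a) a \<in> OmegaIdeal n"
    using assms(1,2) by (simp add: tact_tmonom teps_tmonom psmul_def)
  then have "psub a (\<lambda>p. \<Sum>i < gcd n d. a (i, []) * orbit_sum n d i p) = pzero"
    using degree_zero_invariant_eq_orbit_sums[OF a] by (simp add: psub_def pzero_def)
  then show ?thesis
    using pzero_in_OmegaIdeal by (intro exI[where x = "\<lambda>i. a (i, [])"]) simp
qed

end

theorem lemma4p2:
  fixes lam :: "'k::field" and r m n d :: nat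
    and \<mu> \<mu>s \<gamma> :: "nat \<Rightarrow> 'k"
    and G X :: "(path \<Rightarrow> 'k) \<Rightarrow> (path \<Rightarrow> 'k)"
  assumes r_gt: "1 < r" and r_dvd: "r dvd m" and rm: "r = m"
    and prim: "lam ^ r = 1" "\<forall>k. 0 < k \<and> k < r \<longrightarrow> lam ^ k \<noteq> 1"
    and char: "(of_nat r :: 'k) \<noteq> 0"
    and n3: "3 \<le> n" and d_pos: "0 < d" and d_le: "d \<le> n - 1"
    and units: "\<forall>i<n. \<mu> i \<noteq> 0 \<and> \<mu>s i \<noteq> 0 \<and> \<gamma> i \<noteq> 0"
    and modalg: "module_algebra n m r lam G X"
    and g_e: "\<forall>i<n. G (vtx n i) = vtx n (i + d)"
    and g_a: "\<forall>i<n. G (arr n i) = psmul (\<mu> i) (arr n (i + d))"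
    and g_as: "\<forall>i<n. G (arrs n i) = psmul (\<mu>s i) (arrs n (i + d))"
    and x_e: "\<forall>i<n. X (vtx n i) = psmul (\<gamma> i) (psub (vtx n i) (psmul (inverse lam) (vtx n (i + d))))"
    and x_a: "\<forall>i<n. X (arr n i) =
               psub (psmul (\<gamma> ((i + 1) mod n)) (arr n i)) (psmul (\<gamma> i * inverse lam) (G (arr n i)))"
    and x_as: "\<forall>i<n. X (arrs n i) =
               psub (psmul (\<gamma> i) (arrs n i)) (psmul (\<gamma> ((i + 1) mod n) * inverse lam) (G (arrs n i)))"
    and inner_faithful_path: "\<forall>I. hopf_ideal m r lam I \<and> (\<forall>c\<in>I. \<forall>a\<in>pathalg n. tact m r G X c a = pzero)
               \<longrightarrow> I \<subseteq> {\<lambda>_. 0}"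
    and descends: "\<forall>a\<in>OmegaIdeal n. G a \<in> OmegaIdeal n \<and> X a \<in> OmegaIdeal n"
    and inner_faithful_Pi: "\<forall>I. hopf_ideal m r lam I \<and> (\<forall>c\<in>I. \<forall>a\<in>pathalg n. tact m r G X c a \<in> OmegaIdeal n)
               \<longrightarrow> I \<subseteq> {\<lambda>_. 0}"
  shows "(\<forall>i < gcd n d. (\<forall>c\<in>Tcar m r.
              psub (tact m r G X c (phi r lam G 0 (vtx n i))) (psmul (teps m c) (phi r lam G 0 (vtx n i)))
                \<in> OmegaIdeal n))
       \<and> (\<forall>c :: nat \<Rightarrow> 'k. (\<lambda>p. \<Sum>i < gcd n d. c i * phi r lam G 0 (vtx n i) p) \<in> OmegaIdeal n
              \<longrightarrow> (\<forall>i < gcd n d. c i = 0))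
       \<and> (\<forall>a\<in>pathalg n. (\<forall>v w. a (v, w) \<noteq> 0 \<longrightarrow> w = [])
              \<longrightarrow> (\<forall>c\<in>Tcar m r. psub (tact m r G X c a) (psmul (teps m c) a) \<in> OmegaIdeal n)
              \<longrightarrow> (\<exists>c :: nat \<Rightarrow> 'k. psub a (\<lambda>p. \<Sum>i < gcd n d. c i * phi r lam G 0 (vtx n i) p)
                      \<in> OmegaIdeal n))"
proof -
  have n_pos: "0 < n" using n3 by simp
  have "\<not> n dvd d" using d_pos d_le n3 by (auto dest: dvd_imp_le)
  moreover have "lam \<noteq> 0" using prim(1) r_gt by (auto simp: zero_power)
  moreover have "plinear n G" "plinear n X" "\<forall>a\<in>pathalg n. G (X a) = psmul lam (X (G a))"
    using modalg unfolding module_algebra_def plinear_def by blast+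
  ultimately interpret vertex_shift_action n d lam \<gamma> G X
    using n_pos g_e x_e by unfold_locales
  have "(G ^^ r) (vtx n 0) = vtx n 0"
    using modalg rm vtx_in_pathalg[OF n_pos] unfolding module_algebra_def by blast
  then have "r = n div gcd n d"
    using orbit_length r_gt units n_pos prim(2) by simp
  then have phi: "phi r lam G 0 (vtx n i) = orbit_sum n d i" for i
    using phi_vtx by simp
  have "0 < r" "1 < m" using r_gt rm by simp_all
  then show ?thesis
    unfolding phi
    by (blast intro: orbit_sum_invariant orbit_sums_independent[OF n_pos]
        invariant_degree_zero_in_orbit_span)
qed

end
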